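(* Work in the semifield $\mathbb{R}_{\max,+}$. Let $\bm{r}_1,\ldots,\bm{r}_m\in\mathbb{R}^{n}$ and $w_1,\ldots,w_m\in\mathbb{R}$, let $\bm{p}=w_1\bm{r}_1\oplus\cdots\oplus w_m\bm{r}_m$ and $\bm{q}^{-}=w_1\bm{r}_1^{-}\oplus\cdots\oplus w_m\bm{r}_m^{-}$, and let $\varphi(\bm{x})=\bm{x}^{-}\bm{p}\oplus\bm{q}^{-}\bm{x}$. Let $A=(a_{ij})\in\mathbb{R}_{\max,+}^{n\times n}$ be an irreducible matrix with $\mathrm{Tr}(A)\le\mathbb{1}$, let $S_1=\{\bm{x}\in\mathbb{R}^n\mid A\bm{x}\le\bm{x}\}$ (i.e. $\max_{j}(a_{ij}+x_j)\le x_i$ for all $i$), and put $$\Delta=\sqrt{(A^{\ast}(\bm{q}^{-}A^{\ast})^{-})^{-}\bm{p}}.$$ Then $\min_{\bm{x}\in S_1}\varphi(\bm{x})=\Delta$, and the minimum is attained at $\bm{x}=\Delta A^{\ast}(\bm{q}^{-}A^{\ast})^{-}$.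
   Context: $\mathbb{R}_{\max,+}=(\mathbb{R}\cup\{-\infty\},-\infty,0,\max,+)$: $x\oplus y=\max(x,y)$, $x\otimes y=x+y$ (sign omitted), zero $\mathbb{0}=-\infty$, identity $\mathbb{1}=0$, $x^{-1}=-x$, $\sqrt{x}=x/2$; order is the usual order on $\mathbb{R}\cup\{-\infty\}$. Matrix and vector operations are the usual ones with $\max$ in place of sum and $+$ in place of product; vector inequalities are componentwise. For a nonzero column (or row) vector $\bm{x}=(x_j)$, the pseudo-inverse $\bm{x}^{-}$ is the row (resp. column) vector with entries $-x_j$ if $x_j\ne-\infty$ and $-\infty$ otherwise; $\bm{q}$ is the column vector with $\bm{q}^{-}$ as its pseudo-inverse. $I$ is the identity matrix (0 on the diagonal, $-\infty$ elsewhere), $A^0=I$, $A^{k}=A^{k-1}A$, and $A^{\ast}=I\oplus A\oplus\cdots\oplus A^{n-1}$. A square matrix is irreducible if it cannot be brought to block-triangular form by simultaneous permutation of rows and columns. $\mathrm{tr}A=\bigoplus_i a_{ii}$ and $\mathrm{Tr}(A)=\bigoplus_{k=1}^{n}\mathrm{tr}A^{k}$. *)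

theory Defs
  imports "HOL-Library.Extended_Real"
begin

text \<open>Max-plus algebra over ereal (only the values in real \<union> {-\<infinity>} are meant).
  Matrices are indexed by a finite type 'n (so n = card (UNIV :: 'n set) \<ge> 1).\<close>

definition mp_mult :: "('n::finite \<Rightarrow> 'n \<Rightarrow> ereal) \<Rightarrow> ('n \<Rightarrow> 'n \<Rightarrow> ereal) \<Rightarrow> 'n \<Rightarrow> 'n \<Rightarrow> ereal" where
  "mp_mult A B = (\<lambda>i j. Max (range (\<lambda>k. A i k + B k j)))"

definition mp_id :: "'n::finite \<Rightarrow> 'n \<Rightarrow> ereal" where
  "mp_id = (\<lambda>i j. if i = j then 0 else -\<infinity>)"

fun mp_pow :: "('n::finite \<Rightarrow> 'n \<Rightarrow> ereal) \<Rightarrow> nat \<Rightarrow> 'n \<Rightarrow> 'n \<Rightarrow> ereal" where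
  "mp_pow A 0 = mp_id"
| "mp_pow A (Suc k) = mp_mult (mp_pow A k) A"

definition mp_star :: "('n::finite \<Rightarrow> 'n \<Rightarrow> ereal) \<Rightarrow> 'n \<Rightarrow> 'n \<Rightarrow> ereal" where
  "mp_star A = (\<lambda>i j. Max ((\<lambda>k. mp_pow A k i j) ` {0..<card (UNIV :: 'n set)}))"

definition mp_tr :: "('n::finite \<Rightarrow> 'n \<Rightarrow> ereal) \<Rightarrow> ereal" where
  "mp_tr A = Max (range (\<lambda>i. A i i))"

definition mp_Tr :: "('n::finite \<Rightarrow> 'n \<Rightarrow> ereal) \<Rightarrow> ereal" where
  "mp_Tr A = Max ((\<lambda>k. mp_tr (mp_pow A k)) ` {1..card (UNIV :: 'n set)})"

definition mp_mat_vec :: "('n::finite \<Rightarrow> 'n \<Rightarrow> ereal) \<Rightarrow> ('n \<Rightarrow> ereal) \<Rightarrow> 'n \<Rightarrow> ereal" where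
  "mp_mat_vec A x = (\<lambda>i. Max (range (\<lambda>j. A i j + x j)))"

definition mp_vec_mat :: "('n::finite \<Rightarrow> ereal) \<Rightarrow> ('n \<Rightarrow> 'n \<Rightarrow> ereal) \<Rightarrow> 'n \<Rightarrow> ereal" where
  "mp_vec_mat u A = (\<lambda>j. Max (range (\<lambda>i. u i + A i j)))"

definition mp_inner :: "('n::finite \<Rightarrow> ereal) \<Rightarrow> ('n \<Rightarrow> ereal) \<Rightarrow> ereal" where
  "mp_inner u x = Max (range (\<lambda>i. u i + x i))"

text \<open>Pseudo-inverse (transposition is implicit: vectors are plain functions).\<close>
definition mp_pinv :: "('n \<Rightarrow> ereal) \<Rightarrow> 'n \<Rightarrow> ereal" where
  "mp_pinv x = (\<lambda>i. if x i = -\<infinity> then -\<infinity> else - x i)"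

text \<open>Irreducibility: A cannot be brought to block-triangular form by a simultaneous
  permutation of rows and columns, i.e. there is no nonempty proper index set I such that
  all entries a_ij with i \<in> I, j \<notin> I are the zero -\<infinity>.\<close>
definition mp_irreducible :: "('n::finite \<Rightarrow> 'n \<Rightarrow> ereal) \<Rightarrow> bool" where
  "mp_irreducible A \<longleftrightarrow>
     \<not> (\<exists>I. I \<noteq> {} \<and> I \<noteq> UNIV \<and> (\<forall>i\<in>I. \<forall>j. j \<notin> I \<longrightarrow> A i j = -\<infinity>))"

end

theory Submission imports Defs "HOL-Library.Cardinality" begin

(* Write S = A*, u = q^- S and v = S u^-, so the claimed minimiser is \<Delta> v (in ordinary
   notation: \<Delta> + v, where \<Delta> = D/2 and D = v^- p).
   Because Tr A \<le> 0, closed walks have nonpositive weight and can be cut out of any walk, so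
   every power A^k is dominated by A*; hence A A* \<le> A*, and A x \<le> x implies A* x \<le> x.
   The latter gives x \<le> s v with s = q^- x, so x^- p \<ge> D - s and \<phi>(x) \<ge> max (D - s) s \<ge> D/2.
   Conversely A v \<le> v follows from A A* \<le> A*, and q^- v = 0, so at \<Delta> v both terms of \<phi>
   equal \<Delta>. Finiteness of u and v only needs that S has no +\<infinity> entries and a nonnegative
   diagonal, so irreducibility of A is never used. *)

lemma Max_range_ge: "f i \<le> Max (range (f :: 'n::finite \<Rightarrow> 'a::linorder))"
  by (rule Max_ge) auto

lemma Max_range_obtain:
  fixes f :: "'n::finite \<Rightarrow> 'a::linorder"
  obtains i where "Max (range f) = f i"
proof -
  have "Max (range f) \<in> range f" by (rule Max_in) auto
  then show ?thesis using that by blast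
qed

lemma Max_range_le_iff: "Max (range (f :: 'n::finite \<Rightarrow> 'a::linorder)) \<le> c \<longleftrightarrow> (\<forall>i. f i \<le> c)"
  by (simp add: Max_le_iff)

lemma Max_range_ereal: "Max (range (\<lambda>i. ereal (f i))) = ereal (Max (range (f :: 'n::finite \<Rightarrow> real)))"
  using mono_Max_commute[of ereal "range f"] by (simp add: mono_def image_comp)

lemma Max_range_add_const: "Max (range (\<lambda>i. f i + c)) = Max (range (f :: 'n::finite \<Rightarrow> real)) + c"
  using mono_Max_commute[of "\<lambda>t. t + c" "range f"] by (simp add: mono_def image_comp)

lemma mp_pinv_ereal [simp]: "mp_pinv (\<lambda>i. ereal (x i)) = (\<lambda>i. ereal (- x i))"
  by (simp add: mp_pinv_def)

lemma mp_inner_ereal: "mp_inner (\<lambda>i. ereal (u i)) (\<lambda>i. ereal (x i)) = ereal (Max (range (\<lambda>i. u i + x i)))"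
  by (simp add: mp_inner_def Max_range_ereal)

lemma mp_mat_vec_ge: "A i j + x j \<le> mp_mat_vec A x i"
  unfolding mp_mat_vec_def by (rule Max_range_ge)

lemma mp_mat_vec_obtain:
  obtains j where "mp_mat_vec A x i = A i j + x j"
  unfolding mp_mat_vec_def by (rule Max_range_obtain)

lemma mp_vec_mat_ge: "u i + A i j \<le> mp_vec_mat u A j"
  unfolding mp_vec_mat_def by (rule Max_range_ge)

lemma mp_vec_mat_obtain:
  obtains i where "mp_vec_mat u A j = u i + A i j"
  unfolding mp_vec_mat_def by (rule Max_range_obtain)

lemma mp_mat_vec_le_iff: "mp_mat_vec A x i \<le> c \<longleftrightarrow> (\<forall>j. A i j + x j \<le> c)"
  by (simp add: mp_mat_vec_def Max_range_le_iff)

lemma mp_pow_Suc_ge: "mp_pow A k i l + A l j \<le> mp_pow A (Suc k) i j"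
  by (simp add: mp_mult_def Max_range_ge)

lemma mp_pow_Suc_obtain:
  obtains l where "mp_pow A (Suc k) i j = mp_pow A k i l + A l j"
  using Max_range_obtain[of "\<lambda>l. mp_pow A k i l + A l j"] by (auto simp: mp_mult_def)

definition walk_weight :: "('n \<Rightarrow> 'n \<Rightarrow> ereal) \<Rightarrow> (nat \<Rightarrow> 'n) \<Rightarrow> nat \<Rightarrow> ereal" where
  "walk_weight A f k = (\<Sum>t<k. A (f t) (f (Suc t)))"

lemma walk_weight_le_mp_pow:
  "f 0 = i \<Longrightarrow> f k = j \<Longrightarrow> walk_weight A f k \<le> mp_pow A k i j"
proof (induction k arbitrary: j)
  case 0
  then show ?case by (simp add: walk_weight_def mp_id_def)
next
  case (Suc k)
  have "walk_weight A f (Suc k) = walk_weight A f k + A (f k) j"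
    using Suc.prems by (simp add: walk_weight_def)
  also have "\<dots> \<le> mp_pow A k i (f k) + A (f k) j"
    using Suc.IH[of "f k"] Suc.prems by (intro add_mono) auto
  also have "\<dots> \<le> mp_pow A (Suc k) i j"
    by (rule mp_pow_Suc_ge)
  finally show ?case .
qed

lemma mp_pow_eq_walk_weight:
  assumes fin: "\<forall>i j. A i j \<noteq> \<infinity>" and ne: "mp_pow A k i j \<noteq> -\<infinity>"
  obtains f where "f 0 = i" "f k = j" "walk_weight A f k = mp_pow A k i j"
  using ne
proof (induction k arbitrary: j thesis)
  case 0
  then have "i = j" by (simp add: mp_id_def split: if_splits)
  then show ?case by (intro "0.prems"(1)[of "\<lambda>_. i"]) (simp_all add: walk_weight_def mp_id_def)
next
  case (Suc k)
  obtain l where l: "mp_pow A (Suc k) i j = mp_pow A k i l + A l j"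
    by (rule mp_pow_Suc_obtain)
  have "mp_pow A k i l \<noteq> -\<infinity>" using Suc.prems(2) l fin by auto
  then obtain f where f: "f 0 = i" "f k = l" "walk_weight A f k = mp_pow A k i l"
    using Suc.IH by blast
  define g where "g = f(Suc k := j)"
  have "walk_weight A g k = walk_weight A f k"
    unfolding walk_weight_def g_def by (intro sum.cong) auto
  then have "walk_weight A g (Suc k) = mp_pow A (Suc k) i j"
    using f l by (simp add: walk_weight_def g_def)
  moreover have "g 0 = i" "g (Suc k) = j" using f by (auto simp: g_def)
  ultimately show ?case using Suc.prems(1) by blast
qed

lemma mp_pow_neq_PInf:
  assumes fin: "\<forall>i j. A i j \<noteq> \<infinity>"
  shows "mp_pow A k i j \<noteq> \<infinity>"
proof (induction k arbitrary: j)
  case 0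
  then show ?case by (simp add: mp_id_def)
next
  case (Suc k)
  obtain l where "mp_pow A (Suc k) i j = mp_pow A k i l + A l j"
    by (rule mp_pow_Suc_obtain)
  then show ?case using Suc.IH[of l] fin by simp
qed

lemma mp_pow_le_mp_star_below_card:
  fixes A :: "'n::finite \<Rightarrow> 'n \<Rightarrow> ereal"
  shows "k < CARD('n) \<Longrightarrow> mp_pow A k i j \<le> mp_star A i j"
  unfolding mp_star_def by (rule Max_ge) auto

lemma mp_star_obtain_mp_pow:
  fixes A :: "'n::finite \<Rightarrow> 'n \<Rightarrow> ereal"
  obtains k where "k < CARD('n)" "mp_star A i j = mp_pow A k i j"
proof -
  have "mp_star A i j \<in> (\<lambda>k. mp_pow A k i j) ` {0..<CARD('n)}"
    unfolding mp_star_def by (rule Max_in) auto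
  then show ?thesis using that by auto
qed

lemma walk_revisits_vertex:
  fixes f :: "nat \<Rightarrow> 'n::finite"
  obtains a b where "a < b" "b \<le> CARD('n)" "f a = f b"
proof -
  have "\<not> inj_on f {0..CARD('n)}"
  proof
    assume "inj_on f {0..CARD('n)}"
    then have "card (f ` {0..CARD('n)}) = Suc CARD('n)" by (simp add: card_image)
    moreover have "card (f ` {0..CARD('n)}) \<le> CARD('n)" by (rule card_mono) auto
    ultimately show False by simp
  qed
  then show ?thesis
    using that unfolding inj_on_def by (metis atLeastAtMost_iff linorder_neqE_nat)
qed

lemma closed_walk_weight_le_mp_Tr:
  fixes A :: "'n::finite \<Rightarrow> 'n \<Rightarrow> ereal"
  assumes "0 < c" "c \<le> CARD('n)" "f c = f 0"
  shows "walk_weight A f c \<le> mp_Tr A"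
proof -
  have "walk_weight A f c \<le> mp_pow A c (f 0) (f 0)"
    using assms(3) by (intro walk_weight_le_mp_pow) auto
  also have "\<dots> \<le> mp_tr (mp_pow A c)"
    unfolding mp_tr_def by (rule Max_range_ge)
  also have "\<dots> \<le> mp_Tr A"
    unfolding mp_Tr_def using assms(1,2) by (intro Max_ge) auto
  finally show ?thesis .
qed

lemma walk_weight_remove_cycle:
  assumes "a \<le> b" "b \<le> m" "f a = f b"
  shows "walk_weight A f m =
           walk_weight A (\<lambda>t. if t < a then f t else f (t + (b - a))) (m - (b - a))
         + walk_weight A (\<lambda>t. f (a + t)) (b - a)"
proof -
  define E where "E t = A (f t) (f (Suc t))" for t
  define g where "g t = (if t < a then f t else f (t + (b - a)))" for t
  have "walk_weight A f m = sum E {0..<a} + sum E {a..<b} + sum E {b..<m}"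
    unfolding walk_weight_def E_def using assms(1,2)
    by (simp add: atLeast0LessThan[symmetric] sum.atLeastLessThan_concat)
  moreover have "sum E {a..<b} = walk_weight A (\<lambda>t. f (a + t)) (b - a)"
    unfolding walk_weight_def E_def using assms(1) sum.shift_bounds_nat_ivl[of E 0 a "b - a"]
    by (simp add: E_def add.commute atLeast0LessThan)
  moreover have "walk_weight A g (m - (b - a)) = sum E {0..<a} + sum E {b..<m}"
  proof -
    have "walk_weight A g (m - (b - a))
            = (\<Sum>t\<in>{0..<a}. A (g t) (g (Suc t))) + (\<Sum>t\<in>{a..<m - (b - a)}. A (g t) (g (Suc t)))"
      unfolding walk_weight_def using assms(1,2)
      by (simp add: atLeast0LessThan[symmetric] sum.atLeastLessThan_concat)
    moreover have "(\<Sum>t\<in>{0..<a}. A (g t) (g (Suc t))) = sum E {0..<a}"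
    proof (intro sum.cong refl)
      fix t assume t: "t \<in> {0..<a}"
      have "g (Suc t) = f (Suc t)"
      proof (cases "Suc t < a")
        case False
        then have "Suc t = a" using t by simp
        then show ?thesis using assms by (simp add: g_def)
      qed (simp add: g_def)
      then show "A (g t) (g (Suc t)) = E t" using t by (simp add: g_def E_def)
    qed
    moreover have "(\<Sum>t\<in>{a..<m - (b - a)}. A (g t) (g (Suc t))) = sum E {b..<m}"
      using sum.shift_bounds_nat_ivl[of E a "b - a" "m - (b - a)"] assms(1,2)
      by (simp add: g_def E_def)
    ultimately show ?thesis by simp
  qed
  ultimately show ?thesis unfolding g_def by (simp add: ac_simps)
qed

lemma walk_weight_le_mp_star:
  fixes A :: "'n::finite \<Rightarrow> 'n \<Rightarrow> ereal"
  assumes Tr: "mp_Tr A \<le> 0"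
  shows "f 0 = i \<Longrightarrow> f m = j \<Longrightarrow> walk_weight A f m \<le> mp_star A i j"
proof (induction m arbitrary: f rule: less_induct)
  case (less m)
  show ?case
  proof (cases "m < CARD('n)")
    case True
    then show ?thesis
      using walk_weight_le_mp_pow[OF less.prems] mp_pow_le_mp_star_below_card order_trans by blast
  next
    case False
    obtain a b where ab: "a < b" "b \<le> CARD('n)" "f a = f b"
      using walk_revisits_vertex by blast
    define g where "g t = (if t < a then f t else f (t + (b - a)))" for t
    have "walk_weight A (\<lambda>t. f (a + t)) (b - a) \<le> mp_Tr A"
      using ab by (intro closed_walk_weight_le_mp_Tr) auto
    then have cycle: "walk_weight A (\<lambda>t. f (a + t)) (b - a) \<le> 0"
      using Tr by simp
    have "walk_weight A f m = walk_weight A g (m - (b - a)) + walk_weight A (\<lambda>t. f (a + t)) (b - a)"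
      using walk_weight_remove_cycle[of a b m f A] ab False unfolding g_def by simp
    also have "\<dots> \<le> walk_weight A g (m - (b - a))"
      using add_left_mono[OF cycle] by simp
    also have "\<dots> \<le> mp_star A i j"
      using ab False less.prems by (intro less.IH) (auto simp: g_def)
    finally show ?thesis .
  qed
qed

lemma mp_pow_le_mp_star:
  assumes fin: "\<forall>i j. A i j \<noteq> \<infinity>" and Tr: "mp_Tr A \<le> 0"
  shows "mp_pow A k i j \<le> mp_star A i j"
proof (cases "mp_pow A k i j = -\<infinity>")
  case False
  then obtain f where "f 0 = i" "f k = j" "walk_weight A f k = mp_pow A k i j"
    using mp_pow_eq_walk_weight[OF fin] by metis
  then show ?thesis using walk_weight_le_mp_star[OF Tr] by metis
qed simp

lemma mp_pow_Suc_left_ge: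
  assumes "A i j \<noteq> \<infinity>"
  shows "A i j + mp_pow A k j l \<le> mp_pow A (Suc k) i l"
proof (induction k arbitrary: l)
  case 0
  then show ?case
    using assms mp_pow_Suc_ge[of A 0 i i l] by (cases "A i j") (auto simp: mp_id_def)
next
  case (Suc k)
  obtain m where m: "mp_pow A (Suc k) j l = mp_pow A k j m + A m l"
    by (rule mp_pow_Suc_obtain)
  have "A i j + mp_pow A (Suc k) j l = (A i j + mp_pow A k j m) + A m l"
    by (simp only: m add.assoc)
  also have "\<dots> \<le> mp_pow A (Suc k) i m + A m l"
    by (intro add_right_mono Suc.IH)
  also have "\<dots> \<le> mp_pow A (Suc (Suc k)) i l"
    by (rule mp_pow_Suc_ge)
  finally show ?case .
qed

lemma mp_star_absorbs_left:
  assumes fin: "\<forall>i j. A i j \<noteq> \<infinity>" and Tr: "mp_Tr A \<le> 0"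
  shows "A i j + mp_star A j l \<le> mp_star A i l"
proof -
  obtain k where "mp_star A j l = mp_pow A k j l"
    using mp_star_obtain_mp_pow by metis
  then show ?thesis
    using mp_pow_Suc_left_ge[of A i j k l] mp_pow_le_mp_star[OF fin Tr, of "Suc k" i l] fin
    by simp
qed

lemma mp_star_diag_nonneg: "0 \<le> mp_star A i i"
  using mp_pow_le_mp_star_below_card[of 0 A i i] by (simp add: mp_id_def)

lemma mp_star_neq_PInf:
  assumes "\<forall>i j. A i j \<noteq> \<infinity>"
  shows "mp_star A i j \<noteq> \<infinity>"
  using mp_star_obtain_mp_pow mp_pow_neq_PInf[OF assms] by metis

lemma mp_pow_subsolution:
  assumes x: "\<forall>i. mp_mat_vec A (\<lambda>j. ereal (x j)) i \<le> ereal (x i)"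
  shows "mp_pow A k l i + ereal (x i) \<le> ereal (x l)"
proof (induction k arbitrary: i)
  case 0
  then show ?case by (simp add: mp_id_def)
next
  case (Suc k)
  obtain m where m: "mp_pow A (Suc k) l i = mp_pow A k l m + A m i"
    by (rule mp_pow_Suc_obtain)
  have "A m i + ereal (x i) \<le> ereal (x m)"
    using x by (simp add: mp_mat_vec_le_iff)
  then have "mp_pow A (Suc k) l i + ereal (x i) \<le> mp_pow A k l m + ereal (x m)"
    unfolding m add.assoc by (rule add_left_mono)
  also have "\<dots> \<le> ereal (x l)" by (rule Suc.IH)
  finally show ?case .
qed

lemma mp_star_subsolution:
  assumes "\<forall>i. mp_mat_vec A (\<lambda>j. ereal (x j)) i \<le> ereal (x i)"
  shows "mp_star A l i + ereal (x i) \<le> ereal (x l)"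
  using mp_star_obtain_mp_pow mp_pow_subsolution[OF assms] by metis

lemma mp_vec_mat_real:
  fixes S :: "'n::finite \<Rightarrow> 'n \<Rightarrow> ereal"
  assumes diag: "\<forall>i. 0 \<le> S i i" and fin: "\<forall>i j. S i j \<noteq> \<infinity>"
  obtains u where "mp_vec_mat (\<lambda>i. ereal (q i)) S = (\<lambda>j. ereal (u j))"
proof -
  have "\<bar>mp_vec_mat (\<lambda>i. ereal (q i)) S j\<bar> \<noteq> \<infinity>" for j
  proof -
    have "ereal (q j) \<le> ereal (q j) + S j j"
      using diag add_left_mono[of 0 "S j j" "ereal (q j)"] by simp
    also have "\<dots> \<le> mp_vec_mat (\<lambda>i. ereal (q i)) S j"
      by (rule mp_vec_mat_ge)
    finally have "mp_vec_mat (\<lambda>i. ereal (q i)) S j \<noteq> -\<infinity>" by auto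
    moreover obtain i where "mp_vec_mat (\<lambda>i. ereal (q i)) S j = ereal (q i) + S i j"
      by (rule mp_vec_mat_obtain)
    ultimately show ?thesis using fin by (cases "S i j") auto
  qed
  then show ?thesis
    using that[of "\<lambda>j. real_of_ereal (mp_vec_mat (\<lambda>i. ereal (q i)) S j)"]
    by (simp add: ereal_real')
qed

lemma mp_mat_vec_real:
  fixes S :: "'n::finite \<Rightarrow> 'n \<Rightarrow> ereal"
  assumes diag: "\<forall>i. 0 \<le> S i i" and fin: "\<forall>i j. S i j \<noteq> \<infinity>"
  obtains v where "mp_mat_vec S (\<lambda>j. ereal (y j)) = (\<lambda>i. ereal (v i))"
proof -
  have "\<bar>mp_mat_vec S (\<lambda>j. ereal (y j)) i\<bar> \<noteq> \<infinity>" for i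
  proof -
    have "ereal (y i) \<le> S i i + ereal (y i)"
      using diag add_right_mono[of 0 "S i i" "ereal (y i)"] by simp
    also have "\<dots> \<le> mp_mat_vec S (\<lambda>j. ereal (y j)) i"
      by (rule mp_mat_vec_ge)
    finally have "mp_mat_vec S (\<lambda>j. ereal (y j)) i \<noteq> -\<infinity>" by auto
    moreover obtain j where "mp_mat_vec S (\<lambda>j. ereal (y j)) i = S i j + ereal (y j)"
      by (rule mp_mat_vec_obtain)
    ultimately show ?thesis using fin by (cases "S i j") auto
  qed
  then show ?thesis
    using that[of "\<lambda>i. real_of_ereal (mp_mat_vec S (\<lambda>j. ereal (y j)) i)"]
    by (simp add: ereal_real')
qed

lemma residual_inner_eq_zero:
  fixes S :: "'n::finite \<Rightarrow> 'n \<Rightarrow> ereal"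
  assumes u: "mp_vec_mat (\<lambda>i. ereal (q i)) S = (\<lambda>j. ereal (u j))"
      and v: "mp_mat_vec S (\<lambda>j. ereal (- u j)) = (\<lambda>i. ereal (v i))"
  shows "Max (range (\<lambda>i. q i + v i)) = 0"
proof (rule antisym)
  have u_ge: "ereal (q i) + S i l \<le> ereal (u l)" for i l
    using mp_vec_mat_ge[of "\<lambda>i. ereal (q i)" i S l] by (simp add: u)
  have v_ge: "S i l + ereal (- u l) \<le> ereal (v i)" for i l
    using mp_mat_vec_ge[of S i l "\<lambda>l. ereal (- u l)"] by (simp add: v)
  have "q i + v i \<le> 0" for i
  proof -
    obtain l where l: "ereal (v i) = S i l + ereal (- u l)"
      using mp_mat_vec_obtain[of S "\<lambda>l. ereal (- u l)" i] by (auto simp: v)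
    show ?thesis using l u_ge[of i l] by (cases "S i l") auto
  qed
  then show "Max (range (\<lambda>i. q i + v i)) \<le> 0" by (simp add: Max_range_le_iff)
  obtain l :: 'n where True by blast
  obtain i where i: "ereal (u l) = ereal (q i) + S i l"
    using mp_vec_mat_obtain[of "\<lambda>i. ereal (q i)" S l] by (auto simp: u)
  then have "0 \<le> q i + v i" using v_ge[of i l] by (cases "S i l") auto
  also have "\<dots> \<le> Max (range (\<lambda>i. q i + v i))" by (rule Max_range_ge)
  finally show "0 \<le> Max (range (\<lambda>i. q i + v i))" .
qed

lemma subsolution_le_inner_plus_residual:
  fixes S :: "'n::finite \<Rightarrow> 'n \<Rightarrow> ereal"
  assumes diag: "\<forall>i. 0 \<le> S i i"
      and x: "\<forall>l i. S l i + ereal (x i) \<le> ereal (x l)"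
      and u: "mp_vec_mat (\<lambda>i. ereal (q i)) S = (\<lambda>j. ereal (u j))"
      and v: "mp_mat_vec S (\<lambda>j. ereal (- u j)) = (\<lambda>i. ereal (v i))"
  shows "x i \<le> Max (range (\<lambda>l. q l + x l)) + v i"
proof -
  obtain l where l: "ereal (u i) = ereal (q l) + S l i"
    using mp_vec_mat_obtain[of "\<lambda>i. ereal (q i)" S i] by (auto simp: u)
  have "S i i + ereal (- u i) \<le> ereal (v i)"
    using mp_mat_vec_ge[of S i i "\<lambda>l. ereal (- u l)"] by (simp add: v)
  then have "- u i \<le> v i"
    using diag add_right_mono[of 0 "S i i" "ereal (- u i)"] by (metis add.left_neutral ereal_less_eq(3) order_trans)
  moreover have "u i + x i \<le> q l + x l"
    using l x[rule_format, of l i] by (cases "S l i") auto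
  moreover have "q l + x l \<le> Max (range (\<lambda>l. q l + x l))"
    by (rule Max_range_ge)
  ultimately show ?thesis by linarith
qed

lemma residual_subeigenvector:
  fixes S :: "'n::finite \<Rightarrow> 'n \<Rightarrow> ereal"
  assumes absorb: "\<forall>l. A i j + S j l \<le> S i l"
      and v: "mp_mat_vec S (\<lambda>l. ereal (- u l)) = (\<lambda>i. ereal (v i))"
  shows "A i j + ereal (v j) \<le> ereal (v i)"
proof -
  obtain l where l: "ereal (v j) = S j l + ereal (- u l)"
    using mp_mat_vec_obtain[of S "\<lambda>l. ereal (- u l)" j] by (auto simp: v)
  have "A i j + ereal (v j) = (A i j + S j l) + ereal (- u l)"
    by (simp add: l add.assoc)
  also have "\<dots> \<le> S i l + ereal (- u l)"
    using absorb by (intro add_right_mono) simp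
  also have "\<dots> \<le> ereal (v i)"
    using mp_mat_vec_ge[of S i l "\<lambda>l. ereal (- u l)"] by (simp add: v)
  finally show ?thesis .
qed

lemma mp_subeigenvector_add_const:
  assumes "\<forall>j. A i j + ereal (v j) \<le> ereal (v i)"
  shows "mp_mat_vec A (\<lambda>j. ereal (c + v j)) i \<le> ereal (c + v i)"
  unfolding mp_mat_vec_le_iff
proof
  fix j
  have "(A i j + ereal (v j)) + ereal c \<le> ereal (v i) + ereal c"
    using assms by (intro add_right_mono) simp
  then show "A i j + ereal (c + v j) \<le> ereal (c + v i)"
    by (simp add: add.assoc add.commute[of c])
qed

lemma half_residual_le_max:
  fixes p q v x :: "'n::finite \<Rightarrow> real"
  assumes x: "\<forall>i. x i \<le> Max (range (\<lambda>l. q l + x l)) + v i"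
  shows "Max (range (\<lambda>i. p i - v i)) / 2
           \<le> max (Max (range (\<lambda>i. p i - x i))) (Max (range (\<lambda>i. q i + x i)))"
proof -
  define s where "s = Max (range (\<lambda>i. q i + x i))"
  obtain i where i: "Max (range (\<lambda>i. p i - v i)) = p i - v i"
    by (rule Max_range_obtain)
  have half_le_max: "D / 2 \<le> max M t" if "D - t \<le> M" for D M t :: real
    using that by (simp add: max_def)
  have "p i - v i - s \<le> p i - x i"
    using x s_def by (simp add: algebra_simps)
  also have "\<dots> \<le> Max (range (\<lambda>i. p i - x i))"
    by (rule Max_range_ge)
  finally show ?thesis unfolding i s_def[symmetric] by (rule half_le_max)
qed

lemma half_residual_attained:
  fixes p q v :: "'n::finite \<Rightarrow> real"
  assumes zero: "Max (range (\<lambda>i. q i + v i)) = 0"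
      and d: "d = Max (range (\<lambda>i. p i - v i)) / 2"
  shows "Max (range (\<lambda>i. p i - (d + v i))) = d"
    and "Max (range (\<lambda>i. q i + (d + v i))) = d"
proof -
  have "Max (range (\<lambda>i. p i - (d + v i))) = Max (range (\<lambda>i. p i - v i)) + - d"
    using Max_range_add_const[of "\<lambda>i. p i - v i" "- d"] by (simp add: algebra_simps)
  then show "Max (range (\<lambda>i. p i - (d + v i))) = d" using d by linarith
  have "Max (range (\<lambda>i. q i + (d + v i))) = Max (range (\<lambda>i. q i + v i)) + d"
    using Max_range_add_const[of "\<lambda>i. q i + v i" d] by (simp add: algebra_simps)
  then show "Max (range (\<lambda>i. q i + (d + v i))) = d" using zero by simp
qed

theorem theorem7:
  fixes r :: "'k::finite \<Rightarrow> 'n::finite \<Rightarrow> real"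
    and w :: "'k \<Rightarrow> real"
    and A :: "'n \<Rightarrow> 'n \<Rightarrow> ereal"
    and p qm :: "'n \<Rightarrow> ereal"
    and S1 :: "('n \<Rightarrow> real) set"
    and \<phi> :: "('n \<Rightarrow> real) \<Rightarrow> ereal"
    and \<Delta> :: ereal
  assumes p_def: "p = (\<lambda>i. Max (range (\<lambda>k. ereal (w k) + ereal (r k i))))"
    and qm_def: "qm = (\<lambda>i. Max (range (\<lambda>k. ereal (w k) + mp_pinv (\<lambda>j. ereal (r k j)) i)))"
    and \<phi>_def: "\<phi> = (\<lambda>x. max (mp_inner (mp_pinv (\<lambda>i. ereal (x i))) p) (mp_inner qm (\<lambda>i. ereal (x i))))"
    and A_fin: "\<forall>i j. A i j \<noteq> \<infinity>"
    and irr: "mp_irreducible A"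
    and Tr: "mp_Tr A \<le> 0"
    and S1_def: "S1 = {x. \<forall>i. mp_mat_vec A (\<lambda>j. ereal (x j)) i \<le> ereal (x i)}"
    and \<Delta>_def: "\<Delta> = mp_inner (mp_pinv (mp_mat_vec (mp_star A) (mp_pinv (mp_vec_mat qm (mp_star A))))) p / 2"
  shows "(\<forall>x\<in>S1. \<Delta> \<le> \<phi> x)
       \<and> (\<exists>x0\<in>S1. (\<forall>i. ereal (x0 i) = \<Delta> + mp_mat_vec (mp_star A) (mp_pinv (mp_vec_mat qm (mp_star A))) i)
                  \<and> \<phi> x0 = \<Delta>)"
proof -
  define S where "S = mp_star A"
  define pr where "pr i = Max (range (\<lambda>k. w k + r k i))" for i
  define qr where "qr i = Max (range (\<lambda>k. w k - r k i))" for i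
  have p: "p = (\<lambda>i. ereal (pr i))" and qm: "qm = (\<lambda>i. ereal (qr i))"
    by (simp_all add: p_def qm_def pr_def qr_def mp_pinv_def Max_range_ereal)
  have diag: "\<forall>i. 0 \<le> S i i" and fin: "\<forall>i j. S i j \<noteq> \<infinity>"
    by (simp_all add: S_def mp_star_diag_nonneg mp_star_neq_PInf[OF A_fin])
  obtain u where u: "mp_vec_mat (\<lambda>i. ereal (qr i)) S = (\<lambda>j. ereal (u j))"
    by (rule mp_vec_mat_real[OF diag fin])
  obtain v where v: "mp_mat_vec S (\<lambda>j. ereal (- u j)) = (\<lambda>i. ereal (v i))"
    by (rule mp_mat_vec_real[OF diag fin])
  define d where "d = Max (range (\<lambda>i. pr i - v i)) / 2"
  have \<Delta>: "\<Delta> = ereal d"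
    by (simp add: \<Delta>_def d_def S_def[symmetric] qm u v p mp_inner_ereal algebra_simps)
  have \<phi>: "\<phi> x = ereal (max (Max (range (\<lambda>i. pr i - x i))) (Max (range (\<lambda>i. qr i + x i))))" for x
    by (simp add: \<phi>_def p qm mp_inner_ereal algebra_simps)
  have "\<Delta> \<le> \<phi> x" if "x \<in> S1" for x
  proof -
    have "\<forall>l i. S l i + ereal (x i) \<le> ereal (x l)"
      using that by (simp add: S1_def S_def mp_star_subsolution)
    then have "\<forall>i. x i \<le> Max (range (\<lambda>l. qr l + x l)) + v i"
      using subsolution_le_inner_plus_residual[OF diag _ u v] by blast
    from half_residual_le_max[OF this, of pr, folded d_def] show ?thesis
      unfolding \<Delta> \<phi> ereal_less_eq(3) .
  qed
  moreover define x0 where "x0 i = d + v i" for i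
  have "A i j + ereal (v j) \<le> ereal (v i)" for i j
    using mp_star_absorbs_left[OF A_fin Tr] by (intro residual_subeigenvector[OF _ v]) (simp add: S_def)
  then have "x0 \<in> S1"
    by (simp add: S1_def x0_def mp_subeigenvector_add_const)
  moreover have "\<phi> x0 = \<Delta>"
    using half_residual_attained[OF residual_inner_eq_zero[OF u v] d_def]
    by (simp add: \<phi> \<Delta> x0_def)
  moreover have "ereal (x0 i) = \<Delta> + mp_mat_vec S (mp_pinv (mp_vec_mat qm S)) i" for i
    by (simp add: x0_def \<Delta> qm u v)
  ultimately show ?thesis unfolding S_def by blast
qed

end
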